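(* Let $q$ be a prime number, let $l\ge 2$ be an integer and let $N=q^{l}$. Then $$\mathbb{Z}\text{-}\mathcal{KS}(N)=\{\,q+d,\ q-d\;:\; d \text{ a positive integer with } d\mid (q^{l}-q)\}\setminus\{0,N\}.$$
   Context: Every nonzero rational $\alpha$ is written $\alpha=\alpha_1/\alpha_2$ with $\alpha_1\in\mathbb{Z}$, $\alpha_2$ a positive integer and $\gcd(\alpha_1,\alpha_2)=1$ (for $\alpha\in\mathbb{Z}$ this means $\alpha_2=1$). For an integer $N\ge 2$ and a nonzero rational $\alpha=\alpha_1/\alpha_2$, $N$ is called an $\alpha$-Korselt number if $N\neq\alpha$ and $\alpha_2p-\alpha_1$ divides $\alpha_2N-\alpha_1$ (in $\mathbb{Z}$) for every prime divisor $p$ of $N$. For a subset $\mathbb{A}\subseteq\mathbb{Q}$, the Korselt set $\mathbb{A}\text{-}\mathcal{KS}(N)$ is the set of all $\beta\in\mathbb{A}\setminus\{0,N\}$ such that $N$ is a $\beta$-Korselt number. *)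

theory Defs
  imports Complex_Main "HOL-Computational_Algebra.Primes"
begin

text \<open>A nonzero rational alpha is written alpha1/alpha2 in lowest terms with alpha2 > 0;
  this is exactly quotient_of alpha.\<close>
definition alpha_korselt :: "nat \<Rightarrow> rat \<Rightarrow> bool" where
  "alpha_korselt N \<alpha> \<longleftrightarrow> N \<ge> 2 \<and> \<alpha> \<noteq> 0 \<and> \<alpha> \<noteq> of_nat N \<and>
     (\<forall>p::nat. prime p \<and> p dvd N \<longrightarrow>
        (case quotient_of \<alpha> of (a1, a2) \<Rightarrow> (a2 * int p - a1) dvd (a2 * int N - a1)))"

definition korselt_set :: "rat set \<Rightarrow> nat \<Rightarrow> rat set" where
  "korselt_set A N = {\<beta> \<in> A - {0, of_nat N}. alpha_korselt N \<beta>}"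

end

theory Submission
  imports Defs
begin

text \<open>The only prime divisor of \<open>N = q ^ l\<close> is \<open>q\<close>, so for an integer \<open>b\<close> the number \<open>N\<close> is
  \<open>b\<close>-Korselt exactly when \<open>q - b\<close> divides \<open>N - b = (N - q) + (q - b)\<close>, i.e. when \<open>q - b\<close> divides \<open>N - q\<close>.
  Writing \<open>b = q + d\<close> or \<open>b = q - d\<close> with \<open>d > 0\<close> gives the stated description; \<open>b = q\<close>
  itself is excluded because \<open>N - q \<noteq> 0\<close> once \<open>l \<ge> 2\<close>.\<close>

lemma alpha_korselt_of_int_iff:
  "alpha_korselt N (of_int b) \<longleftrightarrow> N \<ge> 2 \<and> b \<noteq> 0 \<and> b \<noteq> int N \<and>
     (\<forall>p. prime p \<and> p dvd N \<longrightarrow> (int p - b) dvd (int N - b))"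
proof -
  have "(of_int b :: rat) = of_nat N \<longleftrightarrow> b = int N"
    by (metis of_int_eq_iff of_int_of_nat_eq)
  then show ?thesis
    unfolding alpha_korselt_def by auto
qed

lemma korselt_set_Ints:
  "korselt_set \<int> N = of_int ` {b. alpha_korselt N (of_int b)}"
  unfolding korselt_set_def alpha_korselt_def by (auto elim!: Ints_cases)

lemma prime_dvd_prime_power_iff:
  fixes p q :: nat
  assumes "prime q" and "l > 0"
  shows "prime p \<and> p dvd q ^ l \<longleftrightarrow> p = q"
  using assms by (auto simp: prime_dvd_power_iff primes_dvd_imp_eq)

lemma alpha_korselt_prime_power_of_int_iff:
  fixes q l :: nat
  assumes "prime q" and "l > 0"
  shows "alpha_korselt (q ^ l) (of_int b) \<longleftrightarrow>
     b \<noteq> 0 \<and> b \<noteq> int q ^ l \<and> (int q - b) dvd (int q ^ l - int q)"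
proof -
  have "2 \<le> q" using assms(1) by (rule prime_ge_2_nat)
  also have "q \<le> q ^ l" using \<open>2 \<le> q\<close> assms(2) by (simp add: self_le_power)
  finally have "q ^ l \<ge> 2" .
  have "int q ^ l - b = (int q ^ l - int q) + (int q - b)" by simp
  then have "(int q - b) dvd (int q ^ l - b) \<longleftrightarrow> (int q - b) dvd (int q ^ l - int q)"
    by (metis dvd_add_left_iff dvd_refl)
  with \<open>q ^ l \<ge> 2\<close> show ?thesis
    by (simp add: alpha_korselt_of_int_iff prime_dvd_prime_power_iff[OF assms])
qed

lemma shifted_divisors_eq:
  fixes c M :: int
  assumes "M \<noteq> 0"
  shows "{c + d | d. d > 0 \<and> d dvd M} \<union> {c - d | d. d > 0 \<and> d dvd M} = {b. (c - b) dvd M}"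
proof (intro antisym subsetI)
  fix b assume "b \<in> {c + d | d. d > 0 \<and> d dvd M} \<union> {c - d | d. d > 0 \<and> d dvd M}"
  then show "b \<in> {b. (c - b) dvd M}" by auto
next
  fix b assume "b \<in> {b. (c - b) dvd M}"
  then have "(c - b) dvd M" by simp
  with assms have "b \<noteq> c" by auto
  then consider "b > c" | "b < c" by linarith
  then show "b \<in> {c + d | d. d > 0 \<and> d dvd M} \<union> {c - d | d. d > 0 \<and> d dvd M}"
  proof cases
    case 1
    have "b - c = - (c - b)" by simp
    with \<open>(c - b) dvd M\<close> have "(b - c) dvd M"
      by (simp only: minus_dvd_iff)
    with 1 have "b = c + (b - c) \<and> b - c > 0 \<and> (b - c) dvd M"
      by simp
    then show ?thesis by blast
  next
    case 2
    with \<open>(c - b) dvd M\<close> have "b = c - (c - b) \<and> c - b > 0 \<and> (c - b) dvd M"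
      by simp
    then show ?thesis by blast
  qed
qed

theorem theorem3p2:
  fixes q l :: nat
  assumes "prime q" and "l \<ge> 2"
  shows "korselt_set \<int> (q ^ l) =
    ({of_int (int q + d) | d :: int. d > 0 \<and> d dvd (int q ^ l - int q)} \<union>
     {of_int (int q - d) | d :: int. d > 0 \<and> d dvd (int q ^ l - int q)}) - {0, of_nat (q ^ l)}"
proof -
  let ?M = "int q ^ l - int q"
  have "int q ^ 1 < int q ^ l"
    using assms(2) prime_gt_1_nat[OF assms(1)] by (intro power_strict_increasing) auto
  then have "?M \<noteq> 0"
    by simp
  have "{b. alpha_korselt (q ^ l) (of_int b)} = {b. (int q - b) dvd ?M} - {0, int q ^ l}"
    using assms by (auto simp: alpha_korselt_prime_power_of_int_iff)
  then have "korselt_set \<int> (q ^ l) = of_int ` {b. (int q - b) dvd ?M} - {0, of_nat (q ^ l)}"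
    by (simp add: korselt_set_Ints image_set_diff inj_def)
  also have "{b. (int q - b) dvd ?M} =
      {int q + d | d. d > 0 \<and> d dvd ?M} \<union> {int q - d | d. d > 0 \<and> d dvd ?M}"
    using \<open>?M \<noteq> 0\<close> by (rule shifted_divisors_eq[symmetric])
  finally show ?thesis
    by blast
qed

end
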